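(* (Consistent estimation of $p^K$.) In the random Kronecker graph model described in the context, let $\hat p:=\frac{1}{n^2}\sum_{i,j=1}^N\sum_{\alpha,\beta=1}^L\mathcal A_{i\alpha j\beta}$. Then $\hat p-p^K\to 0$ almost surely as $K\to\infty$.
   Context: Notation. Fix integers $m,\ell\ge 1$. For $K\ge1$ put $N=m^K$, $L=\ell^K$, $n=NL=(m\ell)^K$. For a fourth-order tensor $\mathcal T\in\mathbb R^{N\times L\times N\times L}$ (indices $i,j\in\{1,\dots,N\}$, $\alpha,\beta\in\{1,\dots,L\}$), $\mathrm{mat}(\mathcal T)\in\mathbb R^{n\times n}$ is the matrix with entries $\mathrm{mat}(\mathcal T)_{i+(\alpha-1)N,\,j+(\beta-1)N}=\mathcal T_{i\alpha j\beta}$; $\|\mathcal T\|_{\max}=\max_{i,\alpha,j,\beta}|\mathcal T_{i\alpha j\beta}|$. The Einstein product is $(\mathcal A*_2\mathcal B)_{i\alpha j\beta}=\sum_{k,\gamma}\mathcal A_{i\alpha k\gamma}\mathcal B_{k\gamma j\beta}$. A permutation tensor is a tensor $\pi$ such that $\mathrm{mat}(\pi)$ is a permutation matrix; $\pi^{-1}$ is the tensor with $\mathrm{mat}(\pi^{-1})=\mathrm{mat}(\pi)^{-1}$. The Kronecker product of $\mathcal A\in\mathbb R^{I_1\times I_2\times I_3\times I_4}$ and $\mathcal B\in\mathbb R^{J_1\times J_2\times J_3\times J_4}$ is $\mathcal A\otimes\mathcal B\in\mathbb R^{I_1J_1\times I_2J_2\times I_3J_3\times I_4J_4}$ with $(\mathcal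 A\otimes\mathcal B)_{(i_1-1)J_1+j_1,\dots,(i_4-1)J_4+j_4}=\mathcal A_{i_1i_2i_3i_4}\mathcal B_{j_1j_2j_3j_4}$; $\mathcal P^{\otimes K}$ is the $K$-fold Kronecker power. $\mathcal J_k$ is the all-ones tensor in $\mathbb R^{m^k\times\ell^k\times m^k\times\ell^k}$. Random Kronecker graph model. Let $p=p_K\in(0,1)$ and $\mathcal X=\mathcal X_K\in\mathbb R^{m\times\ell\times m\times\ell}$ with $\sup_K\|\mathcal X_K\|_{\max}<\infty$, such that the initiator $\mathcal P_1:=p\,\mathcal J_1+\mathcal X/\sqrt n$ has entries in $[0,1]$; let $\mathcal P_K:=\mathcal P_1^{\otimes K}\in\mathbb R^{N\times L\times N\times L}$. Let $\mathcal B$ have independent entries $\mathcal B_{i\alpha j\beta}\sim\mathrm{Bernoulli}([\mathcal P_K]_{i\alpha j\beta})$, let $\mathcal Z:=\mathcal B-\mathcal P_K$, let $\pi$ be a deterministic permutation tensor, and let the adjacency tensor be $\mathcal A:=\pi*_2(\mathcal P_K+\mathcal Z)*_2\pi^{-1}$ (all random objects for different $K$ defined on a common probability space). Asymptotic statements refer to $K\to\infty$ (hence $n\to\infty$) with $m,\ell$ fixed and $p^K\to q\in(0,1)$. *)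

theory Defs
  imports "HOL-Probability.Probability"
begin

text \<open>Fourth-order real tensors, indexed 0-based: entry (i, alpha, j, beta) with
  i, j < N and alpha, beta < L. Entries outside the index range are irrelevant.\<close>
type_synonym tensor4 = "nat \<Rightarrow> nat \<Rightarrow> nat \<Rightarrow> nat \<Rightarrow> real"

definition ones4 :: tensor4 where "ones4 = (\<lambda>i a j b. 1)"

definition id4 :: tensor4 where
  "id4 = (\<lambda>i a j b. if i = j \<and> a = b then 1 else 0)"

definition einstein :: "nat \<Rightarrow> nat \<Rightarrow> tensor4 \<Rightarrow> tensor4 \<Rightarrow> tensor4" where
  "einstein N L A B = (\<lambda>i a j b. \<Sum>k<N. \<Sum>g<L. A i a k g * B k g j b)"

text \<open>mat(T) as an n x n matrix, n = N*L, 0-based: row i + a*N, column j + b*N.\<close>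
definition mat4 :: "nat \<Rightarrow> nat \<Rightarrow> tensor4 \<Rightarrow> nat \<Rightarrow> nat \<Rightarrow> real" where
  "mat4 N L T = (\<lambda>r c. T (r mod N) (r div N) (c mod N) (c div N))"

definition is_perm_matrix :: "nat \<Rightarrow> (nat \<Rightarrow> nat \<Rightarrow> real) \<Rightarrow> bool" where
  "is_perm_matrix n M \<longleftrightarrow>
     (\<forall>r<n. \<forall>c<n. M r c = 0 \<or> M r c = 1) \<and>
     (\<forall>r<n. \<exists>!c. c < n \<and> M r c = 1) \<and>
     (\<forall>c<n. \<exists>!r. r < n \<and> M r c = 1)"

definition is_perm_tensor :: "nat \<Rightarrow> nat \<Rightarrow> tensor4 \<Rightarrow> bool" where
  "is_perm_tensor N L T \<longleftrightarrow> is_perm_matrix (N * L) (mat4 N L T)"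

text \<open>Kronecker product of A (any size) with B of size J1 x J2 x J3 x J4 (0-based indexing:
  index (i1*J1 + j1) corresponds to (i1, j1)).\<close>
definition kron4 :: "nat \<Rightarrow> nat \<Rightarrow> tensor4 \<Rightarrow> tensor4 \<Rightarrow> tensor4" where
  "kron4 J1 J2 A B = (\<lambda>x1 x2 x3 x4.
      A (x1 div J1) (x2 div J2) (x3 div J1) (x4 div J2) *
      B (x1 mod J1) (x2 mod J2) (x3 mod J1) (x4 mod J2))"

text \<open>K-fold Kronecker power of an m x l x m x l tensor (the 0-fold power is the
  1x1x1x1 tensor with entry 1, the unit of the Kronecker product).\<close>
fun kron_pow :: "nat \<Rightarrow> nat \<Rightarrow> tensor4 \<Rightarrow> nat \<Rightarrow> tensor4" where
  "kron_pow m l P 0 = ones4"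
| "kron_pow m l P (Suc K) = kron4 m l (kron_pow m l P K) P"

definition tsum4 :: "nat \<Rightarrow> nat \<Rightarrow> tensor4 \<Rightarrow> real" where
  "tsum4 N L T = (\<Sum>i<N. \<Sum>a<L. \<Sum>j<N. \<Sum>b<L. T i a j b)"

end

theory Submission
  imports Defs
begin

text \<open>Conjugating by a permutation tensor only relabels the vertices, so the sum of all entries
  of the adjacency tensor is the number of successes among the \<open>n\<^sup>2\<close> independent Bernoulli
  variables. Each entry of \<open>P\<^sub>K\<close> is a product of \<open>K\<close> initiator entries, each within
  \<open>C/\<surd>n\<close> of \<open>p\<close>, so the mean edge probability is within \<open>K C/\<surd>n \<longrightarrow> 0\<close> of \<open>p\<^sup>K\<close>.
  Hoeffding's inequality bounds the probability of an \<open>\<epsilon>\<close>-deviation of the empirical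
  mean from the mean edge probability by \<open>2 exp(-2 \<epsilon>\<^sup>2 n\<^sup>2)\<close>, which is summable in \<open>K\<close>,
  and Borel-Cantelli turns this into almost sure convergence.\<close>

lemma sum_lessThan_mult_mod_div:
  fixes f :: "nat \<Rightarrow> nat \<Rightarrow> 'a::comm_monoid_add"
  shows "(\<Sum>r<N * L. f (r mod N) (r div N)) = (\<Sum>i<N. \<Sum>a<L. f i a)"
proof -
  have "(\<Sum>r<L * N. f (r mod N) (r div N)) = (\<Sum>a<L. \<Sum>i<N. f i a)"
    by (simp flip: sum.nat_group add: sum.atLeastLessThan_shift_0[where m="_ * N"] atLeast0LessThan)
  then show ?thesis
    by (simp add: mult.commute sum.swap[of _ "{..<L}"])
qed

lemma tsum4_eq_sum_mat4: "tsum4 N L T = (\<Sum>r<N * L. \<Sum>c<N * L. mat4 N L T r c)"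
  by (simp only: tsum4_def mat4_def sum_lessThan_mult_mod_div[where N = N and L = L, symmetric])

lemma mat4_einstein:
  "mat4 N L (einstein N L A B) r c = (\<Sum>s<N * L. mat4 N L A r s * mat4 N L B s c)"
  by (simp only: mat4_def einstein_def sum_lessThan_mult_mod_div[where N = N and L = L, symmetric])

lemma mat4_id4: "mat4 N L id4 r c = (if r = c then 1 else 0)"
  by (auto simp: mat4_def id4_def) (metis div_mult_mod_eq)

lemma tsum4_eq_sum_cartesian:
  "tsum4 N L T = (\<Sum>(i, a, j, b)\<in>{..<N} \<times> {..<L} \<times> {..<N} \<times> {..<L}. T i a j b)"
  by (simp add: tsum4_def sum.cartesian_product)

lemma sum_entries_mult_left_col_stochastic:
  fixes P B :: "'i \<Rightarrow> 'i \<Rightarrow> 'a::comm_semiring_1"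
  assumes "\<And>s. s \<in> S \<Longrightarrow> (\<Sum>r\<in>S. P r s) = 1"
  shows "(\<Sum>r\<in>S. \<Sum>c\<in>S. \<Sum>s\<in>S. P r s * B s c) = (\<Sum>s\<in>S. \<Sum>c\<in>S. B s c)"
proof -
  have "(\<Sum>r\<in>S. \<Sum>c\<in>S. \<Sum>s\<in>S. P r s * B s c) = (\<Sum>c\<in>S. \<Sum>r\<in>S. \<Sum>s\<in>S. P r s * B s c)"
    by (rule sum.swap)
  also have "\<dots> = (\<Sum>c\<in>S. \<Sum>s\<in>S. \<Sum>r\<in>S. P r s * B s c)"
    by (rule sum.cong[OF refl], rule sum.swap)
  also have "\<dots> = (\<Sum>c\<in>S. \<Sum>s\<in>S. B s c)"
    by (simp add: assms flip: sum_distrib_right)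
  also have "\<dots> = (\<Sum>s\<in>S. \<Sum>c\<in>S. B s c)"
    by (rule sum.swap)
  finally show ?thesis .
qed

lemma sum_entries_mult_right_row_stochastic:
  fixes A Q :: "'i \<Rightarrow> 'i \<Rightarrow> 'a::comm_semiring_1"
  assumes "\<And>t. t \<in> S \<Longrightarrow> (\<Sum>c\<in>S. Q t c) = 1"
  shows "(\<Sum>r\<in>S. \<Sum>c\<in>S. \<Sum>t\<in>S. A r t * Q t c) = (\<Sum>r\<in>S. \<Sum>t\<in>S. A r t)"
proof -
  have "(\<Sum>r\<in>S. \<Sum>c\<in>S. \<Sum>t\<in>S. A r t * Q t c) = (\<Sum>r\<in>S. \<Sum>t\<in>S. \<Sum>c\<in>S. A r t * Q t c)"
    by (rule sum.cong[OF refl], rule sum.swap)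
  also have "\<dots> = (\<Sum>r\<in>S. \<Sum>t\<in>S. A r t)"
    by (simp add: assms flip: sum_distrib_left)
  finally show ?thesis .
qed

lemma perm_matrix_col_sum:
  assumes "is_perm_matrix n P" and "c < n"
  shows "(\<Sum>r<n. P r c) = 1"
proof -
  have "\<exists>!r. r < n \<and> P r c = 1"
    using assms unfolding is_perm_matrix_def by blast
  then obtain r0 where r0: "r0 < n" "P r0 c = 1" and unique: "\<And>r. r < n \<Longrightarrow> P r c = 1 \<Longrightarrow> r = r0"
    by blast
  have "P r c = 0" if "r \<in> {..<n} - {r0}" for r
  proof -
    have "P r c = 0 \<or> P r c = 1"
      using assms that unfolding is_perm_matrix_def by simp
    then show ?thesis
      using that unique by auto
  qed
  then show ?thesis
    using r0 by (simp add: sum.remove[where x = r0])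
qed

lemma perm_matrix_col_orthonormal:
  assumes "is_perm_matrix n P" and "s < n" and "t < n"
  shows "(\<Sum>r<n. P r t * P r s) = (if s = t then 1 else 0)"
proof -
  have "P r t * P r s = (if s = t then P r t else 0)" if "r < n" for r
  proof -
    have "P r t = 0 \<or> P r t = 1" "P r s = 0 \<or> P r s = 1" "\<exists>!c. c < n \<and> P r c = 1"
      using assms that unfolding is_perm_matrix_def by auto
    then show ?thesis
      using assms by (cases "s = t") auto
  qed
  then show ?thesis
    using perm_matrix_col_sum[OF assms(1,3)] by simp
qed

lemma perm_matrix_right_inverse_eq_transpose:
  assumes P: "is_perm_matrix n P"
    and PQ: "\<And>r c. r < n \<Longrightarrow> c < n \<Longrightarrow> (\<Sum>s<n. P r s * Q s c) = (if r = c then 1 else 0)"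
    and "t < n" and "c < n"
  shows "Q t c = P c t"
proof -
  have "P c t = (\<Sum>r<n. P r t * (if r = c then 1 else 0))"
    using \<open>c < n\<close> by (simp add: if_distrib cong: if_cong)
  also have "\<dots> = (\<Sum>r<n. P r t * (\<Sum>s<n. P r s * Q s c))"
    using PQ \<open>c < n\<close> by simp
  also have "\<dots> = (\<Sum>s<n. (\<Sum>r<n. P r t * P r s) * Q s c)"
    by (simp add: sum_distrib_left sum_distrib_right mult.assoc) (rule sum.swap)
  also have "\<dots> = Q t c"
    using \<open>t < n\<close> by (simp add: perm_matrix_col_orthonormal[OF P] if_distrib[of "\<lambda>x. x * _"] cong: if_cong)
  finally show ?thesis ..
qed

lemma tsum4_perm_conj:
  assumes perm: "is_perm_tensor N L Perm"
    and inv: "\<forall>i<N. \<forall>a<L. \<forall>j<N. \<forall>b<L. einstein N L Perm Perm_inv i a j b = id4 i a j b"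
  shows "tsum4 N L (einstein N L (einstein N L Perm T) Perm_inv) = tsum4 N L T"
proof -
  define n where "n = N * L"
  define P where "P = mat4 N L Perm"
  define Q where "Q = mat4 N L Perm_inv"
  have P_perm: "is_perm_matrix n P"
    using perm unfolding is_perm_tensor_def n_def P_def .
  have PQ: "(\<Sum>s<n. P r s * Q s c) = (if r = c then 1 else 0)" if "r < n" "c < n" for r c
  proof -
    have "0 < N"
      using that unfolding n_def by (cases N) auto
    then have "r mod N < N \<and> r div N < L" "c mod N < N \<and> c div N < L"
      using that unfolding n_def by (auto simp: less_mult_imp_div_less mult.commute)
    then have "mat4 N L (einstein N L Perm Perm_inv) r c = mat4 N L id4 r c"
      using inv unfolding mat4_def by blast
    then show ?thesis
      by (simp add: mat4_einstein mat4_id4 P_def Q_def n_def)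
  qed
  have Q_row_sum: "(\<Sum>c<n. Q t c) = 1" if "t < n" for t
    using perm_matrix_right_inverse_eq_transpose[OF P_perm PQ that] perm_matrix_col_sum[OF P_perm that]
    by simp
  show ?thesis
    using sum_entries_mult_right_row_stochastic[of "{..<n}" Q, OF Q_row_sum]
      sum_entries_mult_left_col_stochastic[of "{..<n}" P, OF perm_matrix_col_sum[OF P_perm]]
    by (simp add: tsum4_eq_sum_mat4 mat4_einstein flip: n_def P_def Q_def)
qed

lemma kron_pow_entry_bounds:
  assumes "0 < m" and "0 < l"
    and P: "\<And>i a j b. i < m \<Longrightarrow> a < l \<Longrightarrow> j < m \<Longrightarrow> b < l \<Longrightarrow>
              0 \<le> P i a j b \<and> P i a j b \<le> 1 \<and> \<bar>P i a j b - c\<bar> \<le> d"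
    and "0 \<le> c" and "c \<le> 1"
    and "i < m ^ k" and "a < l ^ k" and "j < m ^ k" and "b < l ^ k"
  shows "0 \<le> kron_pow m l P k i a j b \<and> kron_pow m l P k i a j b \<le> 1 \<and>
    \<bar>kron_pow m l P k i a j b - c ^ k\<bar> \<le> k * d"
  using assms(6-9)
proof (induction k arbitrary: i a j b)
  case 0
  then show ?case by (simp add: ones4_def)
next
  case (Suc k)
  define A where "A = kron_pow m l P k (i div m) (a div l) (j div m) (b div l)"
  define Q where "Q = P (i mod m) (a mod l) (j mod m) (b mod l)"
  have "i div m < m ^ k" "a div l < l ^ k" "j div m < m ^ k" "b div l < l ^ k"
    using Suc.prems by (simp_all add: less_mult_imp_div_less mult.commute)
  then have A: "0 \<le> A" "A \<le> 1" "\<bar>A - c ^ k\<bar> \<le> k * d"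
    using Suc.IH unfolding A_def by auto
  have Q: "0 \<le> Q" "Q \<le> 1" "\<bar>Q - c\<bar> \<le> d"
    using P[of "i mod m" "a mod l" "j mod m" "b mod l"] \<open>0 < m\<close> \<open>0 < l\<close> unfolding Q_def by auto
  have ck: "0 \<le> c ^ k" "c ^ k \<le> 1"
    using \<open>0 \<le> c\<close> \<open>c \<le> 1\<close> by (simp_all add: power_le_one)
  have "\<bar>A * Q - c ^ Suc k\<bar> = \<bar>(A - c ^ k) * Q + c ^ k * (Q - c)\<bar>"
    by (simp add: algebra_simps)
  also have "\<dots> \<le> \<bar>A - c ^ k\<bar> * \<bar>Q\<bar> + c ^ k * \<bar>Q - c\<bar>"
    using ck by (metis abs_mult abs_of_nonneg abs_triangle_ineq)
  also have "\<dots> \<le> k * d * 1 + 1 * d"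
    using A Q ck by (intro add_mono mult_mono) auto
  finally have "\<bar>A * Q - c ^ Suc k\<bar> \<le> Suc k * d"
    by (simp add: algebra_simps)
  moreover have "kron_pow m l P (Suc k) i a j b = A * Q"
    by (simp add: kron4_def A_def Q_def)
  ultimately show ?case
    using A Q by (simp add: mult_le_one)
qed

lemma kron_pow_perturbed_entry_bounds:
  fixes X :: tensor4 and s :: real
  assumes "0 < m" and "0 < l" and "0 \<le> c" and "c \<le> 1" and "0 \<le> s"
    and X: "\<And>i a j b. i < m \<Longrightarrow> a < l \<Longrightarrow> j < m \<Longrightarrow> b < l \<Longrightarrow> \<bar>X i a j b\<bar> \<le> C"
    and prob: "\<And>i a j b. i < m \<Longrightarrow> a < l \<Longrightarrow> j < m \<Longrightarrow> b < l \<Longrightarrow>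
                 0 \<le> c + X i a j b / s \<and> c + X i a j b / s \<le> 1"
    and "i < m ^ k" and "a < l ^ k" and "j < m ^ k" and "b < l ^ k"
  shows "0 \<le> kron_pow m l (\<lambda>i a j b. c + X i a j b / s) k i a j b \<and>
    kron_pow m l (\<lambda>i a j b. c + X i a j b / s) k i a j b \<le> 1 \<and>
    \<bar>kron_pow m l (\<lambda>i a j b. c + X i a j b / s) k i a j b - c ^ k\<bar> \<le> k * (C / s)"
proof (rule kron_pow_entry_bounds)
  show "0 \<le> c + X i a j b / s \<and> c + X i a j b / s \<le> 1 \<and> \<bar>c + X i a j b / s - c\<bar> \<le> C / s"
    if "i < m" "a < l" "j < m" "b < l" for i a j b
    using prob[OF that] X[OF that] \<open>0 \<le> s\<close> by (simp add: abs_div divide_right_mono)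
qed (use assms in auto)

lemma of_nat_div_sqrt_power_tendsto_0:
  assumes "2 \<le> N"
  shows "(\<lambda>k. real k * (C / sqrt (real (N ^ k)))) \<longlonglongrightarrow> 0"
proof -
  have "1 < sqrt (real N)"
    using assms by simp
  then have "(\<lambda>k. real k * (1 / sqrt (real N)) ^ k) \<longlonglongrightarrow> 0"
    by (intro powser_times_n_limit_0) simp
  from tendsto_mult_left[OF this, of C]
  show ?thesis
    by (simp add: real_sqrt_power field_simps)
qed

lemma abs_average_minus_le:
  fixes f :: "'i \<Rightarrow> real"
  assumes "finite A" and "A \<noteq> {}" and "\<And>x. x \<in> A \<Longrightarrow> \<bar>f x - c\<bar> \<le> d"
  shows "\<bar>(\<Sum>x\<in>A. f x) / card A - c\<bar> \<le> d"
proof -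
  have card: "0 < real (card A)"
    using assms(1,2) by (simp add: card_gt_0_iff)
  have "\<bar>(\<Sum>x\<in>A. f x) / card A - c\<bar> = \<bar>\<Sum>x\<in>A. f x - c\<bar> / card A"
    using card by (simp add: sum_subtractf field_simps)
  also have "\<dots> \<le> (\<Sum>x\<in>A. d) / card A"
    using assms(3) card by (intro divide_right_mono order_trans[OF sum_abs sum_mono]) auto
  also have "\<dots> = d"
    using card by simp
  finally show ?thesis .
qed

lemma (in prob_space) expectation_of_bool_bernoulli:
  fixes v :: real
  assumes "random_variable (count_space UNIV) B"
    and "distr M (count_space UNIV) B = measure_pmf (bernoulli_pmf v)"
    and "0 \<le> v" and "v \<le> 1"
  shows "expectation (\<lambda>w. of_bool (B w)) = v"
proof -
  have "expectation (\<lambda>w. of_bool (B w) :: real) = (\<integral>x. of_bool x \<partial>distr M (count_space UNIV) B)"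
    using integral_distr[OF assms(1), of "of_bool :: bool \<Rightarrow> real"] by simp
  also have "\<dots> = v"
    using assms(2-4) by simp
  finally show ?thesis .
qed

lemma (in prob_space) prob_bernoulli_sum_deviation_ge:
  fixes B :: "'i \<Rightarrow> 'a \<Rightarrow> bool" and v :: "'i \<Rightarrow> real" and e :: real
  assumes "finite I"
    and B_indep: "indep_vars (\<lambda>_. count_space UNIV) B I"
    and distr: "\<And>x. x \<in> I \<Longrightarrow> distr M (count_space UNIV) (B x) = measure_pmf (bernoulli_pmf (v x))"
    and v: "\<And>x. x \<in> I \<Longrightarrow> 0 \<le> v x \<and> v x \<le> 1"
    and "0 \<le> e"
  shows "prob {w \<in> space M. e * card I \<le> \<bar>(\<Sum>x\<in>I. of_bool (B x w)) - (\<Sum>x\<in>I. v x)\<bar>}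
           \<le> 2 * exp (- 2 * e\<^sup>2 * card I)"
proof (cases "I = {}")
  case True
  then show ?thesis
    by (simp add: prob_space)
next
  case False
  then have card: "0 < real (card I)"
    using \<open>finite I\<close> by (simp add: card_gt_0_iff)
  have "indep_vars (\<lambda>_. borel) (\<lambda>x w. of_bool (B x w) :: real) I"
    by (rule indep_vars_compose2[OF B_indep]) simp
  then interpret Hoeffding_ineq M I "\<lambda>x w. of_bool (B x w)" "\<lambda>_. 0" "\<lambda>_. 1"
      "\<Sum>x\<in>I. expectation (\<lambda>w. of_bool (B x w))"
    by unfold_locales (auto simp: \<open>finite I\<close>)
  have "(\<Sum>x\<in>I. expectation (\<lambda>w. of_bool (B x w))) = (\<Sum>x\<in>I. v x)"
    using B_indep distr v by (intro sum.cong refl expectation_of_bool_bernoulli) (auto simp: indep_vars_def)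
  then show ?thesis
    using Hoeffding_ineq_abs_ge[of "e * card I"] \<open>0 \<le> e\<close> card
    by (simp add: power2_eq_square mult_ac)
qed

lemma (in prob_space) AE_eventually_bernoulli_mean_deviation_less:
  fixes B :: "nat \<Rightarrow> 'i \<Rightarrow> 'a \<Rightarrow> bool" and v :: "nat \<Rightarrow> 'i \<Rightarrow> real" and e :: real
  assumes fin: "\<And>k. finite (I k)" and card: "\<And>k. k \<le> card (I k)"
    and indep: "\<And>k. indep_vars (\<lambda>_. count_space UNIV) (B k) (I k)"
    and distr: "\<And>k x. x \<in> I k \<Longrightarrow>
                  distr M (count_space UNIV) (B k x) = measure_pmf (bernoulli_pmf (v k x))"
    and v: "\<And>k x. x \<in> I k \<Longrightarrow> 0 \<le> v k x \<and> v k x \<le> 1"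
    and "0 < e"
  shows "AE w in M. eventually (\<lambda>k.
           \<bar>((\<Sum>x\<in>I k. of_bool (B k x w)) - (\<Sum>x\<in>I k. v k x)) / card (I k)\<bar> < e) sequentially"
proof -
  define D where "D k w = \<bar>(\<Sum>x\<in>I k. of_bool (B k x w)) - (\<Sum>x\<in>I k. v k x)\<bar>" for k w
  define A where "A k = {w \<in> space M. e * card (I k) \<le> D k w}" for k
  have [measurable]: "D k \<in> borel_measurable M" for k
  proof -
    have "(\<lambda>w. of_bool (B k x w) :: real) \<in> borel_measurable M" if "x \<in> I k" for x
      using indep[of k] that unfolding indep_vars_def by (auto intro: measurable_compose)
    then show ?thesis
      unfolding D_def by (intro borel_measurable_abs borel_measurable_diff borel_measurable_sum) auto
  qed
  have bound: "measure M (A k) \<le> 2 * exp (- 2 * e\<^sup>2) ^ k" for k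
  proof -
    have "measure M (A k) \<le> 2 * exp (- 2 * e\<^sup>2 * card (I k))"
      using prob_bernoulli_sum_deviation_ge[OF fin indep distr v, where e = e] \<open>0 < e\<close>
      unfolding A_def D_def by simp
    also have "\<dots> \<le> 2 * exp (- 2 * e\<^sup>2 * k)"
      using mult_left_mono[OF of_nat_mono[OF card[of k]], of "e\<^sup>2"] by simp
    finally show ?thesis
      by (simp only: exp_of_nat2_mult)
  qed
  have "AE w in M. eventually (\<lambda>k. w \<in> space M - A k) sequentially"
  proof (rule borel_cantelli_AE1)
    show "A k \<in> sets M" for k
      unfolding A_def by measurable
    show "emeasure M (A k) < \<infinity>" for k
      by (simp add: emeasure_eq_measure)
    show "summable (\<lambda>k. measure M (A k))"
    proof (rule summable_comparison_test')
      show "summable (\<lambda>k. 2 * exp (- 2 * e\<^sup>2) ^ k)"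
        using \<open>0 < e\<close> by (intro summable_mult summable_geometric) simp
      show "norm (measure M (A k)) \<le> 2 * exp (- 2 * e\<^sup>2) ^ k" for k
        using bound by simp
    qed
  qed
  then show ?thesis
  proof (rule eventually_mono, elim eventually_mono)
    fix w k
    assume "w \<in> space M - A k"
    then have "D k w < e * card (I k)"
      unfolding A_def by auto
    moreover have "0 \<le> D k w"
      by (simp add: D_def)
    ultimately show "\<bar>((\<Sum>x\<in>I k. of_bool (B k x w)) - (\<Sum>x\<in>I k. v k x)) / card (I k)\<bar> < e"
      using \<open>0 < e\<close> by (simp add: D_def abs_div divide_less_eq mult.commute)
  qed
qed

lemma (in prob_space) AE_bernoulli_mean_deviation_tendsto_0:
  fixes B :: "nat \<Rightarrow> 'i \<Rightarrow> 'a \<Rightarrow> bool" and v :: "nat \<Rightarrow> 'i \<Rightarrow> real"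
  assumes fin: "\<And>k. finite (I k)" and card: "\<And>k. k \<le> card (I k)"
    and indep: "\<And>k. indep_vars (\<lambda>_. count_space UNIV) (B k) (I k)"
    and distr: "\<And>k x. x \<in> I k \<Longrightarrow>
                  distr M (count_space UNIV) (B k x) = measure_pmf (bernoulli_pmf (v k x))"
    and v: "\<And>k x. x \<in> I k \<Longrightarrow> 0 \<le> v k x \<and> v k x \<le> 1"
  shows "AE w in M. (\<lambda>k. ((\<Sum>x\<in>I k. of_bool (B k x w)) - (\<Sum>x\<in>I k. v k x)) / card (I k))
                      \<longlonglongrightarrow> 0"
proof -
  have "AE w in M. \<forall>r. eventually (\<lambda>k.
          \<bar>((\<Sum>x\<in>I k. of_bool (B k x w)) - (\<Sum>x\<in>I k. v k x)) / card (I k)\<bar> < inverse (Suc r))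
          sequentially"
    unfolding AE_all_countable
    by (intro allI AE_eventually_bernoulli_mean_deviation_less[OF fin card indep distr v]) simp_all
  then show ?thesis
  proof (rule eventually_mono)
    fix w
    assume small: "\<forall>r. eventually (\<lambda>k.
      \<bar>((\<Sum>x\<in>I k. of_bool (B k x w)) - (\<Sum>x\<in>I k. v k x)) / card (I k)\<bar> < inverse (Suc r))
      sequentially"
    show "(\<lambda>k. ((\<Sum>x\<in>I k. of_bool (B k x w)) - (\<Sum>x\<in>I k. v k x)) / card (I k)) \<longlonglongrightarrow> 0"
      unfolding tendsto_iff
    proof (intro allI impI)
      fix \<epsilon> :: real
      assume "0 < \<epsilon>"
      then obtain r where r: "inverse (real (Suc r)) < \<epsilon>"
        using reals_Archimedean by blast
      from small[rule_format, of r]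
      show "\<forall>\<^sub>F k in sequentially.
          dist (((\<Sum>x\<in>I k. of_bool (B k x w)) - (\<Sum>x\<in>I k. v k x)) / card (I k)) 0 < \<epsilon>"
        by (rule eventually_mono) (use r in \<open>auto simp: dist_real_def intro: less_trans\<close>)
    qed
  qed
qed

lemma (in prob_space) AE_bernoulli_average_tendsto:
  fixes B :: "nat \<Rightarrow> 'i \<Rightarrow> 'a \<Rightarrow> bool" and v :: "nat \<Rightarrow> 'i \<Rightarrow> real"
  assumes fin: "\<And>k. finite (I k)" and ne: "\<And>k. I k \<noteq> {}"
    and card: "\<And>k. k \<le> card (I k)"
    and indep: "\<And>k. indep_vars (\<lambda>_. count_space UNIV) (B k) (I k)"
    and distr: "\<And>k x. x \<in> I k \<Longrightarrow>
                  distr M (count_space UNIV) (B k x) = measure_pmf (bernoulli_pmf (v k x))"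
    and v: "\<And>k x. x \<in> I k \<Longrightarrow> 0 \<le> v k x \<and> v k x \<le> 1"
    and close: "\<And>k x. x \<in> I k \<Longrightarrow> \<bar>v k x - c k\<bar> \<le> d k" and "d \<longlonglongrightarrow> 0"
  shows "AE w in M. (\<lambda>k. (\<Sum>x\<in>I k. of_bool (B k x w)) / card (I k) - c k) \<longlonglongrightarrow> 0"
proof -
  have mean: "(\<lambda>k. (\<Sum>x\<in>I k. v k x) / card (I k) - c k) \<longlonglongrightarrow> 0"
    using abs_average_minus_le[OF fin ne close]
    by (intro Lim_null_comparison[OF always_eventually \<open>d \<longlonglongrightarrow> 0\<close>]) simp
  from AE_bernoulli_mean_deviation_tendsto_0[OF fin card indep distr v]
  show ?thesis
  proof (rule eventually_mono)
    fix w
    assume "(\<lambda>k. ((\<Sum>x\<in>I k. of_bool (B k x w)) - (\<Sum>x\<in>I k. v k x)) / card (I k)) \<longlonglongrightarrow> 0"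
    from tendsto_add[OF this mean]
    show "(\<lambda>k. (\<Sum>x\<in>I k. of_bool (B k x w)) / card (I k) - c k) \<longlonglongrightarrow> 0"
      by (simp add: diff_divide_distrib)
  qed
qed

theorem lemma1:
  fixes M :: "'w measure"
    and m l :: nat
    and p :: "nat \<Rightarrow> real"
    and X :: "nat \<Rightarrow> tensor4"
    and q :: real
    and Bern :: "nat \<Rightarrow> nat \<times> nat \<times> nat \<times> nat \<Rightarrow> 'w \<Rightarrow> bool"
    and perm perm_inv :: "nat \<Rightarrow> tensor4"
  assumes "prob_space M"
    and "m \<ge> 1" and "l \<ge> 1" and "m * l \<ge> 2"
    and "\<And>K. 0 < p K \<and> p K < 1"
    and "\<exists>C. \<forall>K i a j b. i < m \<longrightarrow> a < l \<longrightarrow> j < m \<longrightarrow> b < l \<longrightarrow> \<bar>X K i a j b\<bar> \<le> C"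
    and "\<And>K i a j b. i < m \<Longrightarrow> a < l \<Longrightarrow> j < m \<Longrightarrow> b < l \<Longrightarrow>
           0 \<le> p K + X K i a j b / sqrt (real ((m * l) ^ K)) \<and>
           p K + X K i a j b / sqrt (real ((m * l) ^ K)) \<le> 1"
    and "(\<lambda>K. p K ^ K) \<longlonglongrightarrow> q" and "0 < q" and "q < 1"
    and "\<And>K. prob_space.indep_vars M (\<lambda>_. count_space UNIV) (Bern K)
               ({..<m ^ K} \<times> {..<l ^ K} \<times> {..<m ^ K} \<times> {..<l ^ K})"
    and "\<And>K i a j b. i < m ^ K \<Longrightarrow> a < l ^ K \<Longrightarrow> j < m ^ K \<Longrightarrow> b < l ^ K \<Longrightarrow>
           distr M (count_space UNIV) (Bern K (i, a, j, b)) =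
           measure_pmf (bernoulli_pmf (kron_pow m l
              (\<lambda>i a j b. p K + X K i a j b / sqrt (real ((m * l) ^ K))) K i a j b))"
    and "\<And>K. is_perm_tensor (m ^ K) (l ^ K) (perm K)"
    and "\<And>K. \<forall>i<m ^ K. \<forall>a<l ^ K. \<forall>j<m ^ K. \<forall>b<l ^ K.
           einstein (m ^ K) (l ^ K) (perm K) (perm_inv K) i a j b = id4 i a j b"
  shows "AE w in M.
           (\<lambda>K. tsum4 (m ^ K) (l ^ K)
                   (einstein (m ^ K) (l ^ K)
                      (einstein (m ^ K) (l ^ K) (perm K)
                         (\<lambda>i a j b. of_bool (Bern K (i, a, j, b) w)))
                      (perm_inv K)) / (real ((m * l) ^ K))\<^sup>2
                 - p K ^ K) \<longlonglongrightarrow> 0"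
proof -
  interpret prob_space M
    by (fact assms(1))
  obtain C where C: "\<And>K i a j b. i < m \<Longrightarrow> a < l \<Longrightarrow> j < m \<Longrightarrow> b < l \<Longrightarrow> \<bar>X K i a j b\<bar> \<le> C"
    using assms(6) by blast
  define v where "v K = (\<lambda>(i, a, j, b). kron_pow m l
    (\<lambda>i a j b. p K + X K i a j b / sqrt (real ((m * l) ^ K))) K i a j b)" for K
  define I where "I K = {..<m ^ K} \<times> {..<l ^ K} \<times> {..<m ^ K} \<times> {..<l ^ K}" for K
  have card_I: "card (I K) = ((m * l) ^ K)\<^sup>2" for K
    by (simp add: I_def card_cartesian_product power_mult_distrib power2_eq_square)
  have card_ge: "K \<le> card (I K)" for K
    using le_trans[OF self_le_ge2_pow[OF assms(4)] le_square] by (simp add: card_I power2_eq_square)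
  have entry_bounds: "0 \<le> v K x \<and> v K x \<le> 1 \<and>
      \<bar>v K x - p K ^ K\<bar> \<le> K * (C / sqrt (real ((m * l) ^ K)))" if "x \<in> I K" for K x
  proof -
    obtain i a j b where x: "x = (i, a, j, b)" "i < m ^ K" "a < l ^ K" "j < m ^ K" "b < l ^ K"
      using \<open>x \<in> I K\<close> unfolding I_def by (cases x) auto
    show ?thesis
      unfolding v_def x(1) prod.case
      by (rule kron_pow_perturbed_entry_bounds)
        (use assms(2,3,5,7) C x in \<open>auto simp: less_imp_le\<close>)
  qed
  have "AE w in M. (\<lambda>K. (\<Sum>x\<in>I K. of_bool (Bern K x w)) / card (I K) - p K ^ K) \<longlonglongrightarrow> 0"
    using assms(2,3,11,12) card_ge entry_bounds of_nat_div_sqrt_power_tendsto_0[OF assms(4)]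
    by (intro AE_bernoulli_average_tendsto[where v = v
          and d = "\<lambda>K. K * (C / sqrt (real ((m * l) ^ K)))"])
      (auto simp: I_def v_def lessThan_empty_iff)
  moreover have "tsum4 (m ^ K) (l ^ K)
                   (einstein (m ^ K) (l ^ K)
                      (einstein (m ^ K) (l ^ K) (perm K)
                         (\<lambda>i a j b. of_bool (Bern K (i, a, j, b) w)))
                      (perm_inv K)) / (real ((m * l) ^ K))\<^sup>2
      = (\<Sum>x\<in>I K. of_bool (Bern K x w)) / card (I K)" for K w
    unfolding tsum4_perm_conj[OF assms(13,14)]
    by (simp add: tsum4_eq_sum_cartesian card_I I_def power_mult_distrib power2_eq_square)
  ultimately show ?thesis
    by simp
qed

end
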